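(* The relaxed capacity allocation subproblem (defined below) is equivalent to the maximum net-flow problem on the graph $Z$ (defined below). Hence, for any given set of VNF-nodes $\mathcal{U} \subseteq \mathcal{V}$, the optimal value of the relaxed capacity allocation subproblem equals the maximum total net-flow at the sinks in $\mathcal{U} \subseteq \mathcal{N}_{\mathcal{V}}$ of the associated graph $Z$, i.e., $R_3(\mathcal{U}) = F(\mathcal{U})$.
   Context: Setting: a network with node set $\mathcal{V}$ and a set of flows $\mathcal{F}$; flow $f$ has traffic rate $\lambda_f$ and is routed along a fixed path whose node set is $\mathcal{V}_f$; each node $v$ has processing capacity $c_v$. For a given set of VNF-nodes $\mathcal{U} \subseteq \mathcal{V}$, an assignment $\boldsymbol{\lambda}=(\lambda_f^v)\ge 0$ (the portion of flow $f$ processed at node $v$) is feasible, written $\boldsymbol{\lambda}\in\Lambda^{\mathcal{U}}$, if $\sum_{f \in \mathcal{F}} \lambda_f^v \le c_v$ for all $v \in \mathcal{U}$, $\lambda_f^v = 0$ for all $f$ and all $v \notin \mathcal{U}$, and $\sum_{v \in \mathcal{U}} \lambda_f^v \le \lambda_f$ for all $f$. The relaxed capacity allocation subproblem is to maximize $R_2^{\mathcal{U}}(\boldsymbol{\lambda}) = \sum_{f\in\mathcal{F}} \sum_{v \in \mathcal{V}_f \cap \mathcal{U}} \lambda_f^v$ over $\boldsymbol{\lambda}\in\Lambda^{\mathcal{U}}$, and $R_3(\mathcal{U}) = \max_{\boldsymbol{\lambda}\in\Lambda^{\mathcal{U}}} R_2^{\mathcal{U}}(\boldsymbol{\lambda})$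 denotes its optimal value. Graph $Z=(\mathcal{N},\mathcal{L})$: vertices are a source $s$, a flow-vertex $f$ for each $f\in\mathcal{F}$ (set $\mathcal{N}_{\mathcal{F}}$), a vertex $v'$ for each $v\in\mathcal{V}$ (set $\mathcal{N}_{\mathcal{V}'}$), and a vertex $v$ for each $v \in \mathcal{V}$ (set $\mathcal{N}_{\mathcal{V}}$, the sinks). Edges: $(s,f)$ with capacity $\lambda_f$ for every $f$; $(f,v')$ with capacity $\lambda_f$ for every $f$ and every $v\in\mathcal{V}_f$; $(v',v)$ with capacity $c_v$ for every $v$. Let $c(x,y)$ be the edge capacity ($c(x,y)=0$ if $(x,y)\notin\mathcal{L}$). For $\varphi:\mathcal{N}\times\mathcal{N}\to\mathbb{R}_+$ let $\Phi(\mathcal{X},\mathcal{Y})=\sum_{x\in\mathcal{X}}\sum_{y\in\mathcal{Y}}\varphi(x,y)$. An $s$-$\mathcal{V}$ flow is such a $\varphi$ with $\varphi(x,y)\le c(x,y)$ for all pairs, zero net-flow $\Phi(\mathcal{N},\{x\})-\Phi(\{x\},\mathcal{N})=0$ at every vertex other than $s$ and the sinks, non-positive net-flow at $s$, and non-negative net-flow at every sink in $\mathcal{N}_{\mathcal{V}}$; $\overline{\mathcal{F}}$ is the set of all $s$-$\mathcal{V}$ flows. Identifying $\mathcal{U}\subseteq\mathcal{V}$ with the corresponding sinks in $\mathcal{N}_{\mathcal{V}}$, $F(\mathcal{U}) = \max_{\varphi \in \overline{\mathcal{F}}} (\Phi(\mathcal{N}, \mathcal{U}) - \Phi(\mathcal{U},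 \mathcal{N}))$ is the maximum total net-flow at the sinks in $\mathcal{U}$ (the maximum net-flow problem). *)

theory Defs
  imports Complex_Main
begin

text \<open>V: node set, Fl: flow set, rate f: traffic rate of flow f,
  path f: node set of the path of f, c v: processing capacity of v.
  An assignment lam f v is the portion of flow f processed at v.\<close>

definition feasible ::
  "'v set \<Rightarrow> 'f set \<Rightarrow> ('f \<Rightarrow> real) \<Rightarrow> ('v \<Rightarrow> real) \<Rightarrow> 'v set \<Rightarrow> ('f \<Rightarrow> 'v \<Rightarrow> real) set" where
  "feasible V Fl rate c U =
     {lam. (\<forall>f\<in>Fl. \<forall>v\<in>V. lam f v \<ge> 0)
         \<and> (\<forall>v\<in>U. (\<Sum>f\<in>Fl. lam f v) \<le> c v)
         \<and> (\<forall>f\<in>Fl. \<forall>v\<in>V. v \<notin> U \<longrightarrow> lam f v = 0)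
         \<and> (\<forall>f\<in>Fl. (\<Sum>v\<in>U. lam f v) \<le> rate f)}"

definition R2 :: "'f set \<Rightarrow> ('f \<Rightarrow> 'v set) \<Rightarrow> 'v set \<Rightarrow> ('f \<Rightarrow> 'v \<Rightarrow> real) \<Rightarrow> real" where
  "R2 Fl path U lam = (\<Sum>f\<in>Fl. \<Sum>v\<in>path f \<inter> U. lam f v)"

text \<open>Optimal value of the relaxed capacity allocation subproblem (the maximum,
  expressed as a supremum over the feasible set).\<close>
definition R3 ::
  "'v set \<Rightarrow> 'f set \<Rightarrow> ('f \<Rightarrow> real) \<Rightarrow> ('f \<Rightarrow> 'v set) \<Rightarrow> ('v \<Rightarrow> real) \<Rightarrow> 'v set \<Rightarrow> real" where
  "R3 V Fl rate path c U = (SUP lam \<in> feasible V Fl rate c U. R2 Fl path U lam)"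

datatype ('f, 'v) znode = Src | FN 'f | VP 'v | VN 'v

definition znodes :: "'v set \<Rightarrow> 'f set \<Rightarrow> ('f, 'v) znode set" where
  "znodes V Fl = {Src} \<union> FN ` Fl \<union> VP ` V \<union> VN ` V"

text \<open>Edge capacities; 0 for pairs that are not edges.\<close>
fun zcap ::
  "'v set \<Rightarrow> 'f set \<Rightarrow> ('f \<Rightarrow> real) \<Rightarrow> ('f \<Rightarrow> 'v set) \<Rightarrow> ('v \<Rightarrow> real)
   \<Rightarrow> ('f, 'v) znode \<Rightarrow> ('f, 'v) znode \<Rightarrow> real" where
  "zcap V Fl rate path c Src (FN f) = (if f \<in> Fl then rate f else 0)"
| "zcap V Fl rate path c (FN f) (VP v) = (if f \<in> Fl \<and> v \<in> path f then rate f else 0)"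
| "zcap V Fl rate path c (VP v) (VN w) = (if v = w \<and> v \<in> V then c v else 0)"
| "zcap V Fl rate path c _ _ = 0"

definition Phi :: "('n \<Rightarrow> 'n \<Rightarrow> real) \<Rightarrow> 'n set \<Rightarrow> 'n set \<Rightarrow> real" where
  "Phi \<phi> X Y = (\<Sum>x\<in>X. \<Sum>y\<in>Y. \<phi> x y)"

definition sV_flows ::
  "'v set \<Rightarrow> 'f set \<Rightarrow> ('f \<Rightarrow> real) \<Rightarrow> ('f \<Rightarrow> 'v set) \<Rightarrow> ('v \<Rightarrow> real)
   \<Rightarrow> (('f, 'v) znode \<Rightarrow> ('f, 'v) znode \<Rightarrow> real) set" where
  "sV_flows V Fl rate path c =
     (let N = znodes V Fl in
      {\<phi>. (\<forall>x\<in>N. \<forall>y\<in>N. 0 \<le> \<phi> x y \<and> \<phi> x y \<le> zcap V Fl rate path c x y)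
         \<and> (\<forall>x\<in>N. x \<noteq> Src \<and> x \<notin> VN ` V \<longrightarrow> Phi \<phi> N {x} - Phi \<phi> {x} N = 0)
         \<and> Phi \<phi> N {Src} - Phi \<phi> {Src} N \<le> 0
         \<and> (\<forall>v\<in>V. Phi \<phi> N {VN v} - Phi \<phi> {VN v} N \<ge> 0)})"

text \<open>Maximum total net-flow at the sinks corresponding to U (a supremum).\<close>
definition Fmax ::
  "'v set \<Rightarrow> 'f set \<Rightarrow> ('f \<Rightarrow> real) \<Rightarrow> ('f \<Rightarrow> 'v set) \<Rightarrow> ('v \<Rightarrow> real) \<Rightarrow> 'v set \<Rightarrow> real" where
  "Fmax V Fl rate path c U =
     (let N = znodes V Fl in
      SUP \<phi> \<in> sV_flows V Fl rate path c. Phi \<phi> N (VN ` U) - Phi \<phi> (VN ` U) N)"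

end

theory Submission
  imports Defs
begin

(* The amount of flow f processed at node v corresponds to the flow on the edge (f, v') of Z.
   A feasible assignment, cut down to the part that lies on the path of f and in U (the only
   part R2 counts), is routed along s -> f -> v' -> v; conversely the flows on the edges (f, v')
   of an s-V flow, cut down in the same way, form a feasible assignment. Capacity constraints
   and flow conservation translate into each other and both translations preserve the
   objective, so the two problems attain the same set of values and have the same supremum. *)

lemma znodes_simps [simp]:
  "Src \<in> znodes V Fl"
  "FN f \<in> znodes V Fl \<longleftrightarrow> f \<in> Fl"
  "VP v \<in> znodes V Fl \<longleftrightarrow> v \<in> V"
  "VN v \<in> znodes V Fl \<longleftrightarrow> v \<in> V"
  unfolding znodes_def by auto

lemma sum_znodes:
  assumes "finite V" "finite Fl"
  shows "sum g (znodes V Fl) =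
    g Src + (\<Sum>f\<in>Fl. g (FN f)) + (\<Sum>v\<in>V. g (VP v)) + (\<Sum>v\<in>V. g (VN v))"
proof -
  have "znodes V Fl = insert Src (FN ` Fl \<union> VP ` V \<union> VN ` V)"
    unfolding znodes_def by auto
  moreover have "sum g (FN ` Fl \<union> VP ` V \<union> VN ` V)
      = sum g (FN ` Fl) + sum g (VP ` V) + sum g (VN ` V)"
    using assms by (subst sum.union_disjoint, auto, subst sum.union_disjoint, auto)
  ultimately show ?thesis
    using assms by (simp add: sum.reindex inj_on_def add.assoc image_iff)
qed

definition net_inflow :: "'n set \<Rightarrow> ('n \<Rightarrow> 'n \<Rightarrow> real) \<Rightarrow> 'n set \<Rightarrow> real" where
  "net_inflow N \<phi> X = Phi \<phi> N X - Phi \<phi> X N"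

lemma net_inflow_image:
  assumes "inj_on h A"
  shows "net_inflow N \<phi> (h ` A) = (\<Sum>a\<in>A. net_inflow N \<phi> {h a})"
  using assms unfolding net_inflow_def Phi_def
  by (simp add: sum.reindex sum_subtractf sum.swap[of _ N])

definition within_zcap ::
  "'v set \<Rightarrow> 'f set \<Rightarrow> ('f \<Rightarrow> real) \<Rightarrow> ('f \<Rightarrow> 'v set) \<Rightarrow> ('v \<Rightarrow> real)
   \<Rightarrow> (('f, 'v) znode \<Rightarrow> ('f, 'v) znode \<Rightarrow> real) \<Rightarrow> bool" where
  "within_zcap V Fl rate path c \<phi> \<longleftrightarrow>
     (\<forall>x\<in>znodes V Fl. \<forall>y\<in>znodes V Fl. 0 \<le> \<phi> x y \<and> \<phi> x y \<le> zcap V Fl rate path c x y)"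

lemma within_zcap_zero:
  assumes "within_zcap V Fl rate path c \<phi>" "x \<in> znodes V Fl" "y \<in> znodes V Fl"
    and "zcap V Fl rate path c x y = 0"
  shows "\<phi> x y = 0"
  using assms unfolding within_zcap_def by force

lemma within_zcap_le:
  assumes "within_zcap V Fl rate path c \<phi>" "x \<in> znodes V Fl" "y \<in> znodes V Fl"
  shows "\<phi> x y \<le> zcap V Fl rate path c x y"
  using assms unfolding within_zcap_def by blast

lemma within_zcap_nonneg:
  assumes "within_zcap V Fl rate path c \<phi>" "x \<in> znodes V Fl" "y \<in> znodes V Fl"
  shows "0 \<le> \<phi> x y"
  using assms unfolding within_zcap_def by blast

definition restrict_to_paths ::
  "('f \<Rightarrow> 'v set) \<Rightarrow> 'v set \<Rightarrow> ('f \<Rightarrow> 'v \<Rightarrow> real) \<Rightarrow> 'f \<Rightarrow> 'v \<Rightarrow> real" where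
  "restrict_to_paths path U g f v = (if v \<in> path f \<inter> U then g f v else 0)"

lemma R2_restrict_to_paths: "R2 Fl path U (restrict_to_paths path U g) = R2 Fl path U g"
  unfolding R2_def restrict_to_paths_def by simp

lemma R2_eq_sum_restrict_to_paths:
  assumes "finite U"
  shows "R2 Fl path U g = (\<Sum>u\<in>U. \<Sum>f\<in>Fl. restrict_to_paths path U g f u)"
proof -
  have "(\<Sum>u\<in>U. restrict_to_paths path U g f u) = (\<Sum>u\<in>path f \<inter> U. g f u)" for f
    using assms unfolding restrict_to_paths_def
    by (simp add: sum.inter_restrict Int_commute Int_left_absorb)
  then show ?thesis
    unfolding R2_def by (subst sum.swap) simp
qed

fun flow_of_assignment ::
  "'v set \<Rightarrow> 'f set \<Rightarrow> ('f \<Rightarrow> 'v \<Rightarrow> real) \<Rightarrow> ('f, 'v) znode \<Rightarrow> ('f, 'v) znode \<Rightarrow> real" where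
  "flow_of_assignment V Fl g Src (FN f) = (\<Sum>v\<in>V. g f v)"
| "flow_of_assignment V Fl g (FN f) (VP v) = g f v"
| "flow_of_assignment V Fl g (VP v) (VN w) = (if v = w then \<Sum>f\<in>Fl. g f v else 0)"
| "flow_of_assignment V Fl g _ _ = 0"

context
  fixes V :: "'v set" and Fl :: "'f set" and rate :: "'f \<Rightarrow> real"
    and path :: "'f \<Rightarrow> 'v set" and c :: "'v \<Rightarrow> real"
  assumes finite_V: "finite V" and finite_Fl: "finite Fl"
begin

lemma net_inflow_Src:
  assumes "within_zcap V Fl rate path c \<phi>"
  shows "net_inflow (znodes V Fl) \<phi> {Src} = - (\<Sum>f\<in>Fl. \<phi> Src (FN f))"
  using finite_V finite_Fl
  by (simp add: net_inflow_def Phi_def sum_znodes within_zcap_zero[OF assms])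

lemma net_inflow_FN:
  assumes "within_zcap V Fl rate path c \<phi>" "f \<in> Fl"
  shows "net_inflow (znodes V Fl) \<phi> {FN f} = \<phi> Src (FN f) - (\<Sum>v\<in>V. \<phi> (FN f) (VP v))"
  using finite_V finite_Fl assms(2)
  by (simp add: net_inflow_def Phi_def sum_znodes within_zcap_zero[OF assms(1)])

lemma net_inflow_VP:
  assumes "within_zcap V Fl rate path c \<phi>" "v \<in> V"
  shows "net_inflow (znodes V Fl) \<phi> {VP v} = (\<Sum>f\<in>Fl. \<phi> (FN f) (VP v)) - \<phi> (VP v) (VN v)"
proof -
  have "(\<Sum>w\<in>V. \<phi> (VP v) (VN w)) = (\<Sum>w\<in>{v}. \<phi> (VP v) (VN w))"
    using finite_V assms by (intro sum.mono_neutral_right) (auto intro: within_zcap_zero)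
  then have outflow: "(\<Sum>w\<in>V. \<phi> (VP v) (VN w)) = \<phi> (VP v) (VN v)"
    by simp
  show ?thesis
    using finite_V finite_Fl assms(2)
    by (simp add: outflow net_inflow_def Phi_def sum_znodes within_zcap_zero[OF assms(1)])
qed

lemma net_inflow_VN:
  assumes "within_zcap V Fl rate path c \<phi>" "v \<in> V"
  shows "net_inflow (znodes V Fl) \<phi> {VN v} = \<phi> (VP v) (VN v)"
proof -
  have "(\<Sum>w\<in>V. \<phi> (VP w) (VN v)) = (\<Sum>w\<in>{v}. \<phi> (VP w) (VN v))"
    using finite_V assms by (intro sum.mono_neutral_right) (auto intro: within_zcap_zero)
  then have inflow: "(\<Sum>w\<in>V. \<phi> (VP w) (VN v)) = \<phi> (VP v) (VN v)"
    by simp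
  show ?thesis
    using finite_V finite_Fl assms(2)
    by (simp add: inflow net_inflow_def Phi_def sum_znodes within_zcap_zero[OF assms(1)])
qed

lemma net_inflow_sinks:
  assumes "within_zcap V Fl rate path c \<phi>" "U \<subseteq> V"
  shows "net_inflow (znodes V Fl) \<phi> (VN ` U) = (\<Sum>u\<in>U. \<phi> (VP u) (VN u))"
proof -
  have "inj_on VN U"
    by (simp add: inj_on_def)
  then have "net_inflow (znodes V Fl) \<phi> (VN ` U) = (\<Sum>u\<in>U. net_inflow (znodes V Fl) \<phi> {VN u})"
    by (rule net_inflow_image)
  also have "\<dots> = (\<Sum>u\<in>U. \<phi> (VP u) (VN u))"
    using assms by (intro sum.cong) (auto simp: net_inflow_VN)
  finally show ?thesis .
qed

lemma sV_flows_iff: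
  "\<phi> \<in> sV_flows V Fl rate path c \<longleftrightarrow>
     within_zcap V Fl rate path c \<phi>
     \<and> (\<forall>f\<in>Fl. \<phi> Src (FN f) = (\<Sum>v\<in>V. \<phi> (FN f) (VP v)))
     \<and> (\<forall>v\<in>V. \<phi> (VP v) (VN v) = (\<Sum>f\<in>Fl. \<phi> (FN f) (VP v)))"
  (is "_ \<longleftrightarrow> ?cap \<and> ?conservation_FN \<and> ?conservation_VP")
proof
  assume "\<phi> \<in> sV_flows V Fl rate path c"
  then have cap: ?cap and conservation: "\<And>x. x \<in> znodes V Fl \<Longrightarrow> x \<noteq> Src \<Longrightarrow>
      x \<notin> VN ` V \<Longrightarrow> net_inflow (znodes V Fl) \<phi> {x} = 0"
    unfolding sV_flows_def Let_def within_zcap_def net_inflow_def by auto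
  have ?conservation_FN
    using conservation[of "FN f" for f] by (auto simp: net_inflow_FN[OF cap])
  moreover have ?conservation_VP
    using conservation[of "VP v" for v] by (auto simp: net_inflow_VP[OF cap] image_iff)
  ultimately show "?cap \<and> ?conservation_FN \<and> ?conservation_VP"
    using cap by blast
next
  assume "?cap \<and> ?conservation_FN \<and> ?conservation_VP"
  then have cap: ?cap and ?conservation_FN ?conservation_VP
    by blast+
  then have "net_inflow (znodes V Fl) \<phi> {x} = 0"
    if "x \<in> znodes V Fl" "x \<noteq> Src" "x \<notin> VN ` V" for x
    using that by (cases x) (auto simp: net_inflow_FN[OF cap] net_inflow_VP[OF cap])
  moreover have "net_inflow (znodes V Fl) \<phi> {Src} \<le> 0"
    using within_zcap_nonneg[OF cap] by (simp add: net_inflow_Src[OF cap] sum_nonneg)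
  moreover have "net_inflow (znodes V Fl) \<phi> {VN v} \<ge> 0" if "v \<in> V" for v
    using that within_zcap_nonneg[OF cap] by (simp add: net_inflow_VN[OF cap])
  ultimately show "\<phi> \<in> sV_flows V Fl rate path c"
    using cap unfolding sV_flows_def Let_def within_zcap_def net_inflow_def by blast
qed

lemma flow_of_assignment_in_sV_flows:
  assumes nonneg: "\<And>f v. f \<in> Fl \<Longrightarrow> v \<in> V \<Longrightarrow> 0 \<le> g f v"
    and off_path: "\<And>f v. f \<in> Fl \<Longrightarrow> v \<in> V \<Longrightarrow> v \<notin> path f \<Longrightarrow> g f v = 0"
    and rate_bound: "\<And>f. f \<in> Fl \<Longrightarrow> (\<Sum>v\<in>V. g f v) \<le> rate f"
    and capacity_bound: "\<And>v. v \<in> V \<Longrightarrow> (\<Sum>f\<in>Fl. g f v) \<le> c v"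
  shows "flow_of_assignment V Fl g \<in> sV_flows V Fl rate path c"
proof -
  have "g f v \<le> rate f" if "f \<in> Fl" "v \<in> V" for f v
    using member_le_sum[of v V "g f"] finite_V nonneg rate_bound[of f] that by force
  moreover have "0 \<le> (\<Sum>v\<in>V. g f v)" if "f \<in> Fl" for f
    using nonneg that by (intro sum_nonneg) auto
  moreover have "0 \<le> (\<Sum>f\<in>Fl. g f v)" if "v \<in> V" for v
    using nonneg that by (intro sum_nonneg) auto
  ultimately have "within_zcap V Fl rate path c (flow_of_assignment V Fl g)"
    unfolding within_zcap_def znodes_def
    using nonneg off_path rate_bound capacity_bound by auto
  then show ?thesis
    by (simp add: sV_flows_iff)
qed

lemma flow_of_restricted_assignment_in_sV_flows:
  assumes "lam \<in> feasible V Fl rate c U" "U \<subseteq> V" "\<forall>v\<in>V. c v \<ge> 0"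
  shows "flow_of_assignment V Fl (restrict_to_paths path U lam) \<in> sV_flows V Fl rate path c"
proof -
  let ?g = "restrict_to_paths path U lam"
  have nonneg: "\<And>f v. f \<in> Fl \<Longrightarrow> v \<in> V \<Longrightarrow> 0 \<le> lam f v"
    and capacity: "\<And>v. v \<in> U \<Longrightarrow> (\<Sum>f\<in>Fl. lam f v) \<le> c v"
    and rate: "\<And>f. f \<in> Fl \<Longrightarrow> (\<Sum>v\<in>U. lam f v) \<le> rate f"
    using assms(1) unfolding feasible_def by auto
  have g_le: "?g f v \<le> lam f v" and g_nonneg: "0 \<le> ?g f v" if "f \<in> Fl" "v \<in> V" for f v
    using nonneg that unfolding restrict_to_paths_def by auto
  have "(\<Sum>v\<in>V. ?g f v) \<le> rate f" if "f \<in> Fl" for f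
  proof -
    have "(\<Sum>v\<in>V. ?g f v) = (\<Sum>v\<in>U. ?g f v)"
      using finite_V assms(2) by (intro sum.mono_neutral_right) (auto simp: restrict_to_paths_def)
    also have "\<dots> \<le> (\<Sum>v\<in>U. lam f v)"
      using g_le that assms(2) by (intro sum_mono) auto
    finally show ?thesis
      using rate[OF that] by linarith
  qed
  moreover have "(\<Sum>f\<in>Fl. ?g f v) \<le> c v" if "v \<in> V" for v
  proof (cases "v \<in> U")
    case True
    then have "(\<Sum>f\<in>Fl. ?g f v) \<le> (\<Sum>f\<in>Fl. lam f v)"
      using g_le that by (intro sum_mono) auto
    then show ?thesis
      using capacity[OF True] by linarith
  next
    case False
    then show ?thesis
      using assms(3) that by (simp add: restrict_to_paths_def)
  qed
  ultimately show ?thesis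
    using g_nonneg by (intro flow_of_assignment_in_sV_flows) (auto simp: restrict_to_paths_def)
qed

lemma assignment_to_flow:
  assumes "lam \<in> feasible V Fl rate c U" "U \<subseteq> V" "\<forall>v\<in>V. c v \<ge> 0"
  shows "\<exists>\<phi>\<in>sV_flows V Fl rate path c. net_inflow (znodes V Fl) \<phi> (VN ` U) = R2 Fl path U lam"
proof -
  let ?\<phi> = "flow_of_assignment V Fl (restrict_to_paths path U lam)"
  have flow: "?\<phi> \<in> sV_flows V Fl rate path c"
    using assms by (rule flow_of_restricted_assignment_in_sV_flows)
  have "finite U"
    using finite_V assms(2) by (rule finite_subset[rotated])
  then have "net_inflow (znodes V Fl) ?\<phi> (VN ` U) = R2 Fl path U lam"
    using flow assms(2) by (simp add: sV_flows_iff net_inflow_sinks R2_eq_sum_restrict_to_paths)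
  with flow show ?thesis
    by blast
qed

lemma restricted_edge_flows_feasible:
  assumes "\<phi> \<in> sV_flows V Fl rate path c" "U \<subseteq> V"
  shows "restrict_to_paths path U (\<lambda>f v. \<phi> (FN f) (VP v)) \<in> feasible V Fl rate c U"
proof -
  let ?lam = "restrict_to_paths path U (\<lambda>f v. \<phi> (FN f) (VP v))"
  have cap: "within_zcap V Fl rate path c \<phi>"
    and conservation_FN: "\<And>f. f \<in> Fl \<Longrightarrow> \<phi> Src (FN f) = (\<Sum>v\<in>V. \<phi> (FN f) (VP v))"
    and conservation_VP: "\<And>v. v \<in> V \<Longrightarrow> \<phi> (VP v) (VN v) = (\<Sum>f\<in>Fl. \<phi> (FN f) (VP v))"
    using assms(1) by (auto simp: sV_flows_iff)
  have lam_le: "?lam f v \<le> \<phi> (FN f) (VP v)" and lam_nonneg: "0 \<le> ?lam f v"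
    if "f \<in> Fl" "v \<in> V" for f v
    using within_zcap_nonneg[OF cap] that unfolding restrict_to_paths_def by auto
  have "(\<Sum>v\<in>U. ?lam f v) \<le> rate f" if "f \<in> Fl" for f
  proof -
    have "(\<Sum>v\<in>U. ?lam f v) \<le> (\<Sum>v\<in>U. \<phi> (FN f) (VP v))"
      using lam_le that assms(2) by (intro sum_mono) auto
    also have "\<dots> \<le> (\<Sum>v\<in>V. \<phi> (FN f) (VP v))"
      using finite_V assms(2) that within_zcap_nonneg[OF cap] by (intro sum_mono2) auto
    also have "\<dots> \<le> rate f"
      using within_zcap_le[OF cap, of Src "FN f"] that conservation_FN[OF that] by simp
    finally show ?thesis .
  qed
  moreover have "(\<Sum>f\<in>Fl. ?lam f v) \<le> c v" if "v \<in> V" for v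
  proof -
    have "(\<Sum>f\<in>Fl. ?lam f v) \<le> (\<Sum>f\<in>Fl. \<phi> (FN f) (VP v))"
      using lam_le that by (intro sum_mono) auto
    also have "\<dots> \<le> c v"
      using within_zcap_le[OF cap, of "VP v" "VN v"] that conservation_VP[OF that] by simp
    finally show ?thesis .
  qed
  moreover have "?lam f v = 0" if "v \<notin> U" for f v
    using that by (simp add: restrict_to_paths_def)
  ultimately show ?thesis
    unfolding feasible_def using lam_nonneg assms(2) by blast
qed

lemma flow_to_assignment:
  assumes "\<phi> \<in> sV_flows V Fl rate path c" "U \<subseteq> V"
  shows "\<exists>lam\<in>feasible V Fl rate c U. R2 Fl path U lam = net_inflow (znodes V Fl) \<phi> (VN ` U)"
proof -
  let ?lam = "restrict_to_paths path U (\<lambda>f v. \<phi> (FN f) (VP v))"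
  have cap: "within_zcap V Fl rate path c \<phi>"
    and conservation_VP: "\<And>v. v \<in> V \<Longrightarrow> \<phi> (VP v) (VN v) = (\<Sum>f\<in>Fl. \<phi> (FN f) (VP v))"
    using assms(1) by (auto simp: sV_flows_iff)
  have "finite U"
    using finite_V assms(2) by (rule finite_subset[rotated])
  moreover have "?lam f u = \<phi> (FN f) (VP u)" if "f \<in> Fl" "u \<in> U" for f u
    using that assms(2) within_zcap_zero[OF cap] by (auto simp: restrict_to_paths_def)
  ultimately have "R2 Fl path U ?lam = (\<Sum>u\<in>U. \<phi> (VP u) (VN u))"
    using assms(2)
    by (simp add: R2_restrict_to_paths R2_eq_sum_restrict_to_paths conservation_VP subset_eq)
  then show ?thesis
    using restricted_edge_flows_feasible[OF assms] net_inflow_sinks[OF cap assms(2)] by auto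
qed

lemma feasible_values_eq_flow_values:
  assumes "U \<subseteq> V" "\<forall>v\<in>V. c v \<ge> 0"
  shows "R2 Fl path U ` feasible V Fl rate c U =
    (\<lambda>\<phi>. net_inflow (znodes V Fl) \<phi> (VN ` U)) ` sV_flows V Fl rate path c"
proof (intro equalityI subsetI)
  show "y \<in> (\<lambda>\<phi>. net_inflow (znodes V Fl) \<phi> (VN ` U)) ` sV_flows V Fl rate path c"
    if "y \<in> R2 Fl path U ` feasible V Fl rate c U" for y
    using that assignment_to_flow[OF _ assms] by (force intro: rev_image_eqI)
  show "y \<in> R2 Fl path U ` feasible V Fl rate c U"
    if "y \<in> (\<lambda>\<phi>. net_inflow (znodes V Fl) \<phi> (VN ` U)) ` sV_flows V Fl rate path c" for y
    using that flow_to_assignment[OF _ assms(1)] by (force intro: rev_image_eqI)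
qed

end

theorem lemma1:
  fixes V :: "'v set" and Fl :: "'f set" and rate :: "'f \<Rightarrow> real"
    and path :: "'f \<Rightarrow> 'v set" and c :: "'v \<Rightarrow> real" and U :: "'v set"
  assumes "finite V" and "finite Fl"
    and "\<forall>f\<in>Fl. path f \<subseteq> V"
    and "\<forall>f\<in>Fl. rate f \<ge> 0" and "\<forall>v\<in>V. c v \<ge> 0"
    and "U \<subseteq> V"
  shows "R3 V Fl rate path c U = Fmax V Fl rate path c U"
  unfolding R3_def Fmax_def Let_def net_inflow_def[symmetric]
  using feasible_values_eq_flow_values[OF assms(1,2,6,5)] by simp

end
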